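(* Let $G$ be an $(N,k)$ Adinkra with associated code $C$, with the matrices $\gamma_1,\dots,\gamma_N$ defined as in the context, and let $M=\gamma_{i_1}\gamma_{i_2}\cdots\gamma_{i_t}$ for some $i_1,\dots,i_t\in\{1,\dots,N\}$. Then, for a vertex $x$, the diagonal entry $M_{x,x}$ is non-zero if and only if the walk starting at $x$ and successively following edges of colors $i_1,i_2,\dots,i_t$ is closed (returns to $x$). This happens in one of two ways: (i) trivially, when each edge color occurs an even number of times in $(i_1,\dots,i_t)$, or (ii) when the vector $w\in\mathbb{Z}_2^N$ with $w_i=1$ exactly for the colors occurring an odd number of times in $(i_1,\dots,i_t)$ is a (nonzero) codeword of $C$.
   Context: An Adinkra of dimension $N$ is a finite connected simple graph $G=(V,E)$ with: a bipartition of $V$ into bosons and fermions (every edge joins a boson and a fermion); a height function (irrelevant here); a coloring of $E$ by colors $\{1,\dots,N\}$ such that each vertex is incident to exactly one edge of each color; an edge parity $\pi:E\to\mathbb{Z}_2$ (parity $1$ = dashed); such that every path with edge colors $(i,j)$, $i\ne j$, lies in a unique 4-cycle with colors $(i,j,i,j)$, each having an odd number of dashed edges. If $|V|=2^{N-k}$, $G$ is an $(N,k)$ Adinkra; it has $n=2^{N-k-1}$ bosons $b_1,\dots,b_n$ and $n$ fermions $f_1,\dots,f_n$. A doubly even $(N,k)$ code is a $k$-dimensional subspace of $\mathbb{Z}_2^N$ all of whose elements have weight $\equiv0\pmod4$; $G$ is obtained (up to switching and relabeling) from an $N$-cube Adinkra with vertex labels $\mathbb{Z}_2^N$ (color-$i$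 edges joining $v,v+e_i$) by identifying vertices whose labels differ by elements of a doubly even $(N,k)$ code $C$, its associated code. For each color $i$, $L_i$ is the $n\times n$ matrix with $(L_i)_{r,s}=+1$ if $b_r,f_s$ are joined by a solid edge of color $i$, $-1$ if joined by a dashed edge of color $i$, and $0$ otherwise. $\gamma_i$ is the $2n\times 2n$ real symmetric matrix $\begin{pmatrix}0&L_i\\ L_i^{T}&0\end{pmatrix}$, with rows and columns indexed by $V$ (bosons first, then fermions). *)

theory Defs
  imports Complex_Main
begin

text \<open>The colouring is col, the parity is dashed (True = dashed = parity 1),
  the bipartition is given by the predicate boson (fermions = V minus bosons).
  Vectors of Z_2^N are identified with subsets of the colour set {1..N}
  (addition = symmetric difference, weight = cardinality).\<close>

definition sym_diff :: "'a set \<Rightarrow> 'a set \<Rightarrow> 'a set" where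
  "sym_diff A B = (A - B) \<union> (B - A)"

definition simple_graph :: "'v set \<Rightarrow> 'v set set \<Rightarrow> bool" where
  "simple_graph V E \<longleftrightarrow> finite V \<and>
     (\<forall>e\<in>E. \<exists>u w. u \<in> V \<and> w \<in> V \<and> u \<noteq> w \<and> e = {u, w})"

definition connected_graph :: "'v set \<Rightarrow> 'v set set \<Rightarrow> bool" where
  "connected_graph V E \<longleftrightarrow> V \<noteq> {} \<and>
     (\<forall>u\<in>V. \<forall>w\<in>V. (\<lambda>a b. {a, b} \<in> E)\<^sup>*\<^sup>* u w)"

definition adinkra ::
  "nat \<Rightarrow> 'v set \<Rightarrow> 'v set set \<Rightarrow> ('v set \<Rightarrow> nat) \<Rightarrow> ('v \<Rightarrow> bool) \<Rightarrow> ('v set \<Rightarrow> bool) \<Rightarrow> bool"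
  where
  "adinkra N V E col boson dashed \<longleftrightarrow>
     simple_graph V E \<and> connected_graph V E \<and>
     (\<forall>u w. {u, w} \<in> E \<longrightarrow> (boson u \<longleftrightarrow> \<not> boson w)) \<and>
     (\<forall>e\<in>E. col e \<in> {1..N}) \<and>
     (\<forall>v\<in>V. \<forall>i\<in>{1..N}. \<exists>!e. e \<in> E \<and> v \<in> e \<and> col e = i) \<and>
     (\<forall>v0 v1 v2 i j. i \<noteq> j \<and> {v0, v1} \<in> E \<and> col {v0, v1} = i \<and>
          {v1, v2} \<in> E \<and> col {v1, v2} = j \<longrightarrow>
        (\<exists>!v3. {v2, v3} \<in> E \<and> col {v2, v3} = i \<and> {v3, v0} \<in> E \<and> col {v3, v0} = j \<and>
               odd (length (filter dashed [{v0, v1}, {v1, v2}, {v2, v3}, {v3, v0}]))))"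

definition doubly_even_code :: "nat \<Rightarrow> nat \<Rightarrow> nat set set \<Rightarrow> bool" where
  "doubly_even_code N k C \<longleftrightarrow>
     C \<subseteq> Pow {1..N} \<and> {} \<in> C \<and> (\<forall>a\<in>C. \<forall>b\<in>C. sym_diff a b \<in> C) \<and>
     card C = 2 ^ k \<and> (\<forall>c\<in>C. 4 dvd card c)"

text \<open>C is an associated code of G: G is (up to switching and relabelling) the
  quotient of the N-cube (vertex labels = subsets of {1..N}, colour-i edges joining
  a and a + e_i) by C.  The quotient map is q; switching only changes the parity,
  so it does not enter here.\<close>
definition associated_code ::
  "nat \<Rightarrow> nat \<Rightarrow> 'v set \<Rightarrow> 'v set set \<Rightarrow> ('v set \<Rightarrow> nat) \<Rightarrow> nat set set \<Rightarrow> bool" where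
  "associated_code N k V E col C \<longleftrightarrow> doubly_even_code N k C \<and>
     (\<exists>q :: nat set \<Rightarrow> 'v.
        q ` Pow {1..N} = V \<and>
        (\<forall>a\<in>Pow {1..N}. \<forall>b\<in>Pow {1..N}. q a = q b \<longleftrightarrow> sym_diff a b \<in> C) \<and>
        E = {{q a, q (sym_diff a {i})} | a i. a \<subseteq> {1..N} \<and> i \<in> {1..N}} \<and>
        (\<forall>a\<in>Pow {1..N}. \<forall>i\<in>{1..N}. col {q a, q (sym_diff a {i})} = i))"

text \<open>L_i as a function of (boson, fermion) and gamma_i indexed by V with the
  block structure [[0, L_i], [L_i^T, 0]].\<close>
definition Lmat :: "'v set set \<Rightarrow> ('v set \<Rightarrow> nat) \<Rightarrow> ('v set \<Rightarrow> bool) \<Rightarrow> nat \<Rightarrow> 'v \<Rightarrow> 'v \<Rightarrow> real" where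
  "Lmat E col dashed i b f =
     (if {b, f} \<in> E \<and> col {b, f} = i then (if dashed {b, f} then -1 else 1) else 0)"

definition gamma ::
  "'v set set \<Rightarrow> ('v set \<Rightarrow> nat) \<Rightarrow> ('v \<Rightarrow> bool) \<Rightarrow> ('v set \<Rightarrow> bool) \<Rightarrow> nat \<Rightarrow> 'v \<Rightarrow> 'v \<Rightarrow> real" where
  "gamma E col boson dashed i x y =
     (if boson x \<and> \<not> boson y then Lmat E col dashed i x y
      else if \<not> boson x \<and> boson y then Lmat E col dashed i y x
      else 0)"

definition matmul :: "'v set \<Rightarrow> ('v \<Rightarrow> 'v \<Rightarrow> real) \<Rightarrow> ('v \<Rightarrow> 'v \<Rightarrow> real) \<Rightarrow> 'v \<Rightarrow> 'v \<Rightarrow> real" where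
  "matmul V A B x y = (\<Sum>z\<in>V. A x z * B z y)"

fun gamma_prod ::
  "'v set \<Rightarrow> 'v set set \<Rightarrow> ('v set \<Rightarrow> nat) \<Rightarrow> ('v \<Rightarrow> bool) \<Rightarrow> ('v set \<Rightarrow> bool) \<Rightarrow> nat list \<Rightarrow> 'v \<Rightarrow> 'v \<Rightarrow> real"
  where
  "gamma_prod V E col boson dashed [] = (\<lambda>x y. if x = y then 1 else 0)"
| "gamma_prod V E col boson dashed (i # is) =
     matmul V (gamma E col boson dashed i) (gamma_prod V E col boson dashed is)"

definition nbr :: "'v set set \<Rightarrow> ('v set \<Rightarrow> nat) \<Rightarrow> 'v \<Rightarrow> nat \<Rightarrow> 'v" where
  "nbr E col v i = (THE u. {v, u} \<in> E \<and> col {v, u} = i)"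

fun walk_end :: "'v set set \<Rightarrow> ('v set \<Rightarrow> nat) \<Rightarrow> 'v \<Rightarrow> nat list \<Rightarrow> 'v" where
  "walk_end E col x [] = x"
| "walk_end E col x (i # is) = walk_end E col (nbr E col x i) is"

definition odd_colours :: "nat list \<Rightarrow> nat set" where
  "odd_colours is = {i. odd (count_list is i)}"

end

theory Submission
  imports Defs
begin

text \<open>Each row of a \<gamma>-matrix has a single non-zero entry, equal to \<open>\<plusminus>1\<close> and sitting in the
  column of the neighbour along that colour; this shape is preserved under matrix products,
  so row \<open>x\<close> of \<open>\<gamma>_i1 \<cdots> \<gamma>_it\<close> is non-zero exactly at the end of the coloured walk from \<open>x\<close>.
  In the cube quotient \<open>x = q a\<close>, a colour-\<open>i\<close> step flips coordinate \<open>i\<close>, so the walk ends at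
  \<open>q (a + w)\<close> with \<open>w\<close> the odd-colour vector, and it is closed iff \<open>w \<in> C\<close>.\<close>

definition signed_unit_row :: "('v \<Rightarrow> 'v \<Rightarrow> real) \<Rightarrow> 'v \<Rightarrow> 'v \<Rightarrow> bool" where
  "signed_unit_row A x y0 \<longleftrightarrow>
     (\<exists>s. (s = 1 \<or> s = -1) \<and> (\<forall>y. A x y = (if y = y0 then s else 0)))"

lemma signed_unit_row_nonzero_iff:
  "signed_unit_row A x y0 \<Longrightarrow> A x y \<noteq> 0 \<longleftrightarrow> y = y0"
  unfolding signed_unit_row_def by (auto split: if_splits)

lemma signed_unit_row_matmul:
  assumes "finite V" "y0 \<in> V"
    and A: "signed_unit_row A x y0" and B: "signed_unit_row B y0 z0"
  shows "signed_unit_row (matmul V A B) x z0"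
proof -
  obtain s where s: "s = 1 \<or> s = -1" "\<And>y. A x y = (if y = y0 then s else 0)"
    using A unfolding signed_unit_row_def by blast
  obtain t where t: "t = 1 \<or> t = -1" "\<And>z. B y0 z = (if z = z0 then t else 0)"
    using B unfolding signed_unit_row_def by blast
  have "matmul V A B x z = (\<Sum>y\<in>V. if y = y0 then s * B y z else 0)" for z
    unfolding matmul_def s(2) by (intro sum.cong) auto
  then have "matmul V A B x z = s * B y0 z" for z
    using assms(1,2) by (simp add: sum.delta')
  then have "\<forall>z. matmul V A B x z = (if z = z0 then s * t else 0)"
    using t(2) by simp
  moreover have "s * t = 1 \<or> s * t = -1"
    using s(1) t(1) by auto
  ultimately show ?thesis
    unfolding signed_unit_row_def by blast
qed

lemma simple_graph_edge_ends_distinct: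
  "simple_graph V E \<Longrightarrow> {u, w} \<in> E \<Longrightarrow> u \<noteq> w \<and> u \<in> V \<and> w \<in> V"
  unfolding simple_graph_def by (metis doubleton_eq_iff)

lemma nbr_unique_edge:
  assumes G: "simple_graph V E" and v: "v \<in> V"
    and ex1: "\<exists>!e. e \<in> E \<and> v \<in> e \<and> col e = i"
  shows nbr_edge: "{v, nbr E col v i} \<in> E" "col {v, nbr E col v i} = i"
    and nbr_eqI: "\<And>u. {v, u} \<in> E \<Longrightarrow> col {v, u} = i \<Longrightarrow> u = nbr E col v i"
proof -
  have uniq: "u = u'"
    if "{v, u} \<in> E" "col {v, u} = i" "{v, u'} \<in> E" "col {v, u'} = i" for u u'
  proof -
    have "{v, u} = {v, u'}"
      using ex1 that by blast
    moreover have "u \<noteq> v" "u' \<noteq> v"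
      using simple_graph_edge_ends_distinct[OF G] that(1,3) by auto
    ultimately show ?thesis
      by (metis doubleton_eq_iff)
  qed
  obtain e where e: "e \<in> E" "v \<in> e" "col e = i"
    using ex1 by blast
  obtain a b where "e = {a, b}"
    using G e(1) unfolding simple_graph_def by blast
  with e(2) obtain u where "e = {v, u}"
    by (metis insert_commute insertE singletonD)
  then have "\<exists>!u. {v, u} \<in> E \<and> col {v, u} = i"
    using e uniq by blast
  from theI'[OF this] show "{v, nbr E col v i} \<in> E" "col {v, nbr E col v i} = i"
    unfolding nbr_def by auto
  then show "\<And>u. {v, u} \<in> E \<Longrightarrow> col {v, u} = i \<Longrightarrow> u = nbr E col v i"
    using uniq by blast
qed

lemma adinkra_simple_graph: "adinkra N V E col boson dashed \<Longrightarrow> simple_graph V E"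
  unfolding adinkra_def by (elim conjE)

lemma adinkra_bipartite:
  "adinkra N V E col boson dashed \<Longrightarrow> {u, w} \<in> E \<Longrightarrow> boson u \<longleftrightarrow> \<not> boson w"
  unfolding adinkra_def by (elim conjE) blast

lemma adinkra_unique_colour_edge:
  "adinkra N V E col boson dashed \<Longrightarrow> v \<in> V \<Longrightarrow> i \<in> {1..N} \<Longrightarrow>
     \<exists>!e. e \<in> E \<and> v \<in> e \<and> col e = i"
  unfolding adinkra_def by (elim conjE) blast

lemma adinkra_nbr_in_vertices:
  assumes "adinkra N V E col boson dashed" "v \<in> V" "i \<in> {1..N}"
  shows "nbr E col v i \<in> V"
proof -
  have G: "simple_graph V E"
    using adinkra_simple_graph[OF assms(1)] .
  show ?thesis
    using simple_graph_edge_ends_distinct[OF G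
        nbr_edge(1)[OF G assms(2) adinkra_unique_colour_edge[OF assms]]] by blast
qed

lemma Lmat_commute: "Lmat E col dashed i b f = Lmat E col dashed i f b"
  unfolding Lmat_def by (simp add: insert_commute)

lemma gamma_signed_unit_row:
  assumes G: "simple_graph V E" and v: "x \<in> V"
    and ex1: "\<exists>!e. e \<in> E \<and> x \<in> e \<and> col e = i"
    and bip: "\<And>u w. {u, w} \<in> E \<Longrightarrow> boson u \<longleftrightarrow> \<not> boson w"
  shows "signed_unit_row (gamma E col boson dashed i) x (nbr E col x i)"
proof -
  let ?n = "nbr E col x i" and ?s = "if dashed {x, nbr E col x i} then -1 else (1::real)"
  have L: "Lmat E col dashed i x y = (if y = ?n then ?s else 0)" for y
  proof -
    have "{x, y} \<in> E \<and> col {x, y} = i \<longleftrightarrow> y = ?n"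
      using nbr_edge[OF G v ex1] nbr_eqI[OF G v ex1, of y] by blast
    then show ?thesis
      unfolding Lmat_def by auto
  qed
  have bip_n: "boson x \<longleftrightarrow> \<not> boson ?n"
    using bip nbr_edge(1)[OF G v ex1] .
  have "gamma E col boson dashed i x y = (if y = ?n then ?s else 0)" for y
  proof (cases "y = ?n")
    case True
    then show ?thesis
      using bip_n L[of y] Lmat_commute[of E col dashed i x y] unfolding gamma_def by auto
  next
    case False
    then have "Lmat E col dashed i y x = 0"
      using L[of y] Lmat_commute[of E col dashed i x y] by simp
    then show ?thesis
      using False L[of y] unfolding gamma_def by simp
  qed
  then show ?thesis
    unfolding signed_unit_row_def by (intro exI[of _ ?s]) auto
qed

lemma gamma_prod_signed_unit_row:
  assumes A: "adinkra N V E col boson dashed"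
  shows "x \<in> V \<Longrightarrow> set is \<subseteq> {1..N} \<Longrightarrow>
    signed_unit_row (gamma_prod V E col boson dashed is) x (walk_end E col x is)"
proof (induction "is" arbitrary: x)
  case Nil
  then show ?case
    unfolding signed_unit_row_def by (intro exI[of _ 1]) auto
next
  case (Cons i "is")
  then have i: "i \<in> {1..N}" and nV: "nbr E col x i \<in> V"
    using adinkra_nbr_in_vertices[OF A] by auto
  show ?case
    unfolding gamma_prod.simps walk_end.simps
  proof (rule signed_unit_row_matmul[OF _ nV])
    show "finite V"
      using adinkra_simple_graph[OF A] unfolding simple_graph_def by blast
    show "signed_unit_row (gamma E col boson dashed i) x (nbr E col x i)"
      using gamma_signed_unit_row[OF adinkra_simple_graph[OF A] Cons.prems(1)
          adinkra_unique_colour_edge[OF A Cons.prems(1) i] adinkra_bipartite[OF A]] .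
    show "signed_unit_row (gamma_prod V E col boson dashed is) (nbr E col x i)
            (walk_end E col (nbr E col x i) is)"
      using Cons.IH[OF nV] Cons.prems(2) by simp
  qed
qed

lemma sym_diff_assoc: "sym_diff (sym_diff a b) c = sym_diff a (sym_diff b c)"
  unfolding sym_diff_def by blast

lemma sym_diff_cancel_left: "sym_diff (sym_diff a b) a = b"
  unfolding sym_diff_def by blast

lemma sym_diff_subset: "a \<subseteq> S \<Longrightarrow> b \<subseteq> S \<Longrightarrow> sym_diff a b \<subseteq> S"
  unfolding sym_diff_def by blast

lemma odd_colours_Nil: "odd_colours [] = {}"
  unfolding odd_colours_def by simp

lemma odd_colours_Cons: "odd_colours (i # is) = sym_diff {i} (odd_colours is)"
  unfolding odd_colours_def sym_diff_def by auto

lemma odd_colours_subset_set: "odd_colours is \<subseteq> set is"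
  unfolding odd_colours_def by (metis count_list_0_iff even_zero mem_Collect_eq subsetI)

lemma odd_colours_empty_iff:
  "set is \<subseteq> S \<Longrightarrow> odd_colours is = {} \<longleftrightarrow> (\<forall>i\<in>S. even (count_list is i))"
  using odd_colours_subset_set[of "is"] unfolding odd_colours_def by auto

lemma walk_end_cube_quotient:
  assumes nbr_q: "\<And>a i. a \<subseteq> {1..N} \<Longrightarrow> i \<in> {1..N} \<Longrightarrow>
                         nbr E col (q a) i = q (sym_diff a {i})"
  shows "a \<subseteq> {1..N} \<Longrightarrow> set is \<subseteq> {1..N} \<Longrightarrow>
     walk_end E col (q a) is = q (sym_diff a (odd_colours is))"
proof (induction "is" arbitrary: a)
  case Nil
  then show ?case
    by (simp add: odd_colours_Nil sym_diff_def)
next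
  case (Cons i "is")
  then have "walk_end E col (q a) (i # is) = q (sym_diff (sym_diff a {i}) (odd_colours is))"
    using nbr_q sym_diff_subset[of a "{1..N}" "{i}"] by simp
  also have "sym_diff (sym_diff a {i}) (odd_colours is) = sym_diff a (odd_colours (i # is))"
    unfolding sym_diff_assoc odd_colours_Cons ..
  finally show ?case .
qed

lemma associated_code_nbr:
  assumes A: "adinkra N V E col boson dashed"
    and qV: "q ` Pow {1..N} = V"
    and qE: "E = {{q a, q (sym_diff a {i})} | a i. a \<subseteq> {1..N} \<and> i \<in> {1..N}}"
    and qc: "\<forall>a\<in>Pow {1..N}. \<forall>i\<in>{1..N}. col {q a, q (sym_diff a {i})} = i"
    and a: "a \<subseteq> {1..N}" and i: "i \<in> {1..N}"
  shows "nbr E col (q a) i = q (sym_diff a {i})"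
proof (rule nbr_eqI[symmetric])
  show "simple_graph V E"
    using adinkra_simple_graph[OF A] .
  show qa: "q a \<in> V"
    using qV a by blast
  show "\<exists>!e. e \<in> E \<and> q a \<in> e \<and> col e = i"
    using adinkra_unique_colour_edge[OF A qa i] .
  show "{q a, q (sym_diff a {i})} \<in> E"
    unfolding qE using a i by blast
  show "col {q a, q (sym_diff a {i})} = i"
    using qc a i by blast
qed

lemma associated_code_walk_closed_iff:
  assumes A: "adinkra N V E col boson dashed" and code: "associated_code N k V E col C"
    and "is": "set is \<subseteq> {1..N}" and x: "x \<in> V"
  shows "walk_end E col x is = x \<longleftrightarrow> odd_colours is \<in> C"
proof -
  obtain q where qV: "q ` Pow {1..N} = V"
    and q_eq: "\<forall>a\<in>Pow {1..N}. \<forall>b\<in>Pow {1..N}. q a = q b \<longleftrightarrow> sym_diff a b \<in> C"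
    and qE: "E = {{q a, q (sym_diff a {i})} | a i. a \<subseteq> {1..N} \<and> i \<in> {1..N}}"
    and qc: "\<forall>a\<in>Pow {1..N}. \<forall>i\<in>{1..N}. col {q a, q (sym_diff a {i})} = i"
    using code unfolding associated_code_def by blast
  obtain a where a: "a \<subseteq> {1..N}" "x = q a"
    using qV x by blast
  let ?w = "odd_colours is"
  have w_sub: "?w \<subseteq> {1..N}"
    using odd_colours_subset_set "is" by blast
  have "walk_end E col x is = q (sym_diff a ?w)"
    unfolding a(2)
    using walk_end_cube_quotient[OF associated_code_nbr[OF A qV qE qc] a(1) "is"] .
  then show ?thesis
    using q_eq a sym_diff_subset[OF a(1) w_sub] sym_diff_cancel_left[of a ?w] by auto
qed

theorem mainTheorem11:
  fixes N k :: nat and V :: "'v set" and E :: "'v set set"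
    and col :: "'v set \<Rightarrow> nat" and boson :: "'v \<Rightarrow> bool" and dashed :: "'v set \<Rightarrow> bool"
    and C :: "nat set set" and "is" :: "nat list" and x :: 'v
  assumes "adinkra N V E col boson dashed"
    and "card V = 2 ^ (N - k)"
    and "associated_code N k V E col C"
    and "set is \<subseteq> {1..N}"
    and "x \<in> V"
  shows "(gamma_prod V E col boson dashed is x x \<noteq> 0 \<longleftrightarrow> walk_end E col x is = x) \<and>
         (walk_end E col x is = x \<longleftrightarrow>
            (\<forall>i\<in>{1..N}. even (count_list is i)) \<or>
            (odd_colours is \<noteq> {} \<and> odd_colours is \<in> C))"
proof
  show "gamma_prod V E col boson dashed is x x \<noteq> 0 \<longleftrightarrow> walk_end E col x is = x"
    using signed_unit_row_nonzero_iff[OF gamma_prod_signed_unit_row[OF assms(1,5,4)], of x] by auto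
next
  have "{} \<in> C"
    using assms(3) unfolding associated_code_def doubly_even_code_def by blast
  then show "walk_end E col x is = x \<longleftrightarrow>
      (\<forall>i\<in>{1..N}. even (count_list is i)) \<or> (odd_colours is \<noteq> {} \<and> odd_colours is \<in> C)"
    using associated_code_walk_closed_iff[OF assms(1,3,4,5)] odd_colours_empty_iff[OF assms(4)]
    by auto
qed

end
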